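(* Let $(\mathbf a^{\langle t\rangle},\mathbf b^{\langle t\rangle})_{t\ge0}$ be the re-parameterized Population EM iterates for Model 2 (defined in the context). If $\langle\mathbf b^{\langle 0\rangle},\boldsymbol\theta^*\rangle=0$, then $(\mathbf a^{\langle t\rangle},\mathbf b^{\langle t\rangle})\to(\mathbf 0,\mathbf 0)$ as $t\to\infty$.
   Context: $\phi_d$ is the density of $N(\mathbf 0,I_d)$ (the known covariance is taken to be $I_d$). Model 2: $\boldsymbol\mu_1^*,\boldsymbol\mu_2^*\in\mathbb{R}^d$ and $\mathbf Y\sim\tfrac12N(\boldsymbol\mu_1^*,I_d)+\tfrac12N(\boldsymbol\mu_2^*,I_d)$. Let $v_d(\mathbf y,\boldsymbol\mu_1,\boldsymbol\mu_2)=\frac{\phi_d(\mathbf y-\boldsymbol\mu_1)}{\phi_d(\mathbf y-\boldsymbol\mu_1)+\phi_d(\mathbf y-\boldsymbol\mu_2)}$. Population EM for Model 2: from $(\boldsymbol\mu_1^{\langle0\rangle},\boldsymbol\mu_2^{\langle0\rangle})$, $\boldsymbol\mu_1^{\langle t+1\rangle}=\frac{\mathbb{E}[v_d(\mathbf Y,\boldsymbol\mu_1^{\langle t\rangle},\boldsymbol\mu_2^{\langle t\rangle})\mathbf Y]}{\mathbb{E}[v_d(\mathbf Y,\boldsymbol\mu_1^{\langle t\rangle},\boldsymbol\mu_2^{\langle t\rangle})]}$, $\boldsymbol\mu_2^{\langle t+1\rangle}=\frac{\mathbb{E}[(1-v_d(\mathbf Y,\boldsymbol\mu_1^{\langle t\rangle},\boldsymbol\mu_2^{\langle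 t\rangle}))\mathbf Y]}{\mathbb{E}[1-v_d(\mathbf Y,\boldsymbol\mu_1^{\langle t\rangle},\boldsymbol\mu_2^{\langle t\rangle})]}$. Re-parameterization: $\mathbf a^{\langle t\rangle}=\frac{\boldsymbol\mu_1^{\langle t\rangle}+\boldsymbol\mu_2^{\langle t\rangle}}2-\frac{\boldsymbol\mu_1^*+\boldsymbol\mu_2^*}2$, $\mathbf b^{\langle t\rangle}=\frac{\boldsymbol\mu_2^{\langle t\rangle}-\boldsymbol\mu_1^{\langle t\rangle}}2$, $\boldsymbol\theta^*=\frac{\boldsymbol\mu_2^*-\boldsymbol\mu_1^*}2$. *)

theory Defs
  imports "HOL-Analysis.Analysis"
begin

definition gauss_pdf :: "'a::euclidean_space \<Rightarrow> real" where
  "gauss_pdf x = (2 * pi) powr (- real DIM('a) / 2) * exp (- (norm x)\<^sup>2 / 2)"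

definition mix_pdf :: "'a::euclidean_space \<Rightarrow> 'a \<Rightarrow> 'a \<Rightarrow> real" where
  "mix_pdf m1s m2s y = gauss_pdf (y - m1s) / 2 + gauss_pdf (y - m2s) / 2"

definition mix_expect :: "'a::euclidean_space \<Rightarrow> 'a \<Rightarrow> ('a \<Rightarrow> 'b::{banach,second_countable_topology}) \<Rightarrow> 'b" where
  "mix_expect m1s m2s f = (\<integral>y. mix_pdf m1s m2s y *\<^sub>R f y \<partial>lborel)"

definition v_d :: "'a::euclidean_space \<Rightarrow> 'a \<Rightarrow> 'a \<Rightarrow> real" where
  "v_d y m1 m2 = gauss_pdf (y - m1) / (gauss_pdf (y - m1) + gauss_pdf (y - m2))"

definition em_step :: "'a::euclidean_space \<Rightarrow> 'a \<Rightarrow> 'a \<times> 'a \<Rightarrow> 'a \<times> 'a" where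
  "em_step m1s m2s p =
     (case p of (m1, m2) \<Rightarrow>
       ((1 / mix_expect m1s m2s (\<lambda>y. v_d y m1 m2)) *\<^sub>R mix_expect m1s m2s (\<lambda>y. v_d y m1 m2 *\<^sub>R y),
        (1 / mix_expect m1s m2s (\<lambda>y. 1 - v_d y m1 m2)) *\<^sub>R mix_expect m1s m2s (\<lambda>y. (1 - v_d y m1 m2) *\<^sub>R y)))"

definition em_iter :: "'a::euclidean_space \<Rightarrow> 'a \<Rightarrow> 'a \<Rightarrow> 'a \<Rightarrow> nat \<Rightarrow> 'a \<times> 'a" where
  "em_iter m1s m2s m10 m20 t = (em_step m1s m2s ^^ t) (m10, m20)"

end

theory Submission
  imports Defs "HOL-Probability.Distributions" "HOL-Real_Asymp.Real_Asymp"
begin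

text \<open>Write the iterate as \<open>(c + a - b, c + a + b)\<close> with \<open>c\<close> the true centre. When \<open>b \<bottom> \<theta>\<^sup>*\<close>, the
  posterior weight at \<open>y = z + \<mu>\<^sub>i\<^sup>*\<close> is the same logistic function \<open>s(z) = \<sigma>(2\<langle>a,b\<rangle> - 2\<langle>z,b\<rangle>)\<close>
  for both components, and Stein's identity \<open>E[s(Z) Z] = -2 E[s(1 - s)(Z)] b\<close> turns the EM update into
  \<open>b' = \<rho> b\<close>, \<open>a' = \<alpha> b\<close> with \<open>\<bar>\<alpha>\<bar> \<le> \<rho> = 1 - Var s(Z) / (p (1 - p))\<close>, where \<open>p = E[s(Z)]\<close>.
  So \<open>b\<close> stays orthogonal to \<open>\<theta>\<^sup>*\<close>, \<open>\<parallel>b\<parallel>\<close> is nonincreasing and \<open>\<parallel>a\<parallel> \<le> \<parallel>b\<parallel>\<close> after one step.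
  While \<open>\<parallel>b\<parallel> \<ge> \<epsilon>\<close> the logistic ramp is steep and its centre \<open>\<langle>a,b\<rangle>/\<parallel>b\<parallel>\<close> stays bounded, so
  \<open>Var s(Z)\<close> is bounded below and \<open>\<rho> \<le> 1 - \<delta>\<close> uniformly; hence \<open>b \<rightarrow> 0\<close>, and then \<open>a \<rightarrow> 0\<close>.\<close>

section \<open>The standard normal density\<close>

lemma std_normal_density_at_top: "(std_normal_density \<longlongrightarrow> 0) at_top"
  unfolding std_normal_density_def by real_asymp

lemma std_normal_density_at_bot: "(std_normal_density \<longlongrightarrow> 0) at_bot"
  unfolding std_normal_density_def by real_asymp

lemma integrable_std_normal_density_bounded:
  assumes [measurable]: "g \<in> borel_measurable borel" and bound: "\<And>y. \<bar>g y\<bar> \<le> C"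
  shows "integrable lborel (\<lambda>y. std_normal_density y * g y)"
proof (rule Bochner_Integration.integrable_bound)
  show "integrable lborel (\<lambda>y. C * std_normal_density y)" by simp
  show "AE y in lborel. norm (std_normal_density y * g y) \<le> norm (C * std_normal_density y)"
    using bound by (auto simp: abs_mult mult.commute intro!: mult_right_mono order.trans[OF _ abs_ge_self])
qed simp

lemma integrable_std_normal_density_bounded_times_id:
  assumes [measurable]: "g \<in> borel_measurable borel" and bound: "\<And>y. \<bar>g y\<bar> \<le> C"
  shows "integrable lborel (\<lambda>y. std_normal_density y * g y * y)"
proof (rule Bochner_Integration.integrable_bound)
  show "integrable lborel (\<lambda>y. C * (std_normal_density y * \<bar>y\<bar>))"
    using integrable_std_normal_moment_abs[of 1] by simp
  show "AE y in lborel. norm (std_normal_density y * g y * y) \<le> norm (C * (std_normal_density y * \<bar>y\<bar>))"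
  proof (intro always_eventually allI)
    fix y
    have "\<bar>g y\<bar> * (std_normal_density y * \<bar>y\<bar>) \<le> \<bar>C\<bar> * (std_normal_density y * \<bar>y\<bar>)"
      by (rule mult_right_mono) (use bound[of y] in auto)
    then show "norm (std_normal_density y * g y * y) \<le> norm (C * (std_normal_density y * \<bar>y\<bar>))"
      by (simp add: abs_mult mult_ac)
  qed
qed simp

lemma std_normal_integration_by_parts:
  fixes f f' :: "real \<Rightarrow> real"
  assumes deriv: "\<And>y. (f has_real_derivative f' y) (at y)" and cont: "\<And>y. isCont f' y"
    and f_bound: "\<And>y. \<bar>f y\<bar> \<le> C" and f'_bound: "\<And>y. \<bar>f' y\<bar> \<le> D"
  shows "(\<integral>y. std_normal_density y * f y * y \<partial>lborel) = (\<integral>y. std_normal_density y * f' y \<partial>lborel)"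
proof -
  let ?N = std_normal_density
  have f_cont: "isCont f y" for y by (rule DERIV_isCont[OF deriv])
  have [measurable]: "f \<in> borel_measurable borel" "f' \<in> borel_measurable borel"
    using f_cont cont by (auto intro!: borel_measurable_continuous_onI continuous_at_imp_continuous_on)
  have int1: "integrable lborel (\<lambda>y. ?N y * f y * y)"
    by (rule integrable_std_normal_density_bounded_times_id[OF _ f_bound]) simp
  have int2: "integrable lborel (\<lambda>y. ?N y * f' y)"
    by (rule integrable_std_normal_density_bounded[OF _ f'_bound]) simp
  define F where "F y = - (?N y * f y)" for y
  have F_deriv: "(F has_real_derivative ?N y * f y * y - ?N y * f' y) (at y)" for y
  proof -
    have "(?N has_real_derivative ?N y * (- y)) (at y)"
      unfolding std_normal_density_def
      by (auto intro!: derivative_eq_intros simp: power2_eq_square field_simps)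
    from DERIV_minus[OF DERIV_mult[OF this deriv]] show ?thesis
      unfolding F_def by (simp add: algebra_simps)
  qed
  have F_lim: "(F \<longlongrightarrow> 0) G" if "(?N \<longlongrightarrow> 0) G" for G
  proof (rule Lim_null_comparison[OF _ tendsto_mult_right_zero[OF that, of C]])
    show "\<forall>\<^sub>F y in G. norm (F y) \<le> C * ?N y"
      using f_bound by (intro always_eventually) (simp add: F_def abs_mult mult.commute mult_right_mono)
  qed
  have "(LBINT y=-\<infinity>..\<infinity>. ?N y * f y * y - ?N y * f' y) = 0 - 0"
  proof (rule interval_integral_FTC_integrable[where F=F])
    show "set_integrable lborel (einterval (-\<infinity>) \<infinity>) (\<lambda>y. ?N y * f y * y - ?N y * f' y)"
      unfolding set_integrable_def using int1 int2 by simp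
    show "((F \<circ> real_of_ereal) \<longlongrightarrow> 0) (at_right (-\<infinity>))" "((F \<circ> real_of_ereal) \<longlongrightarrow> 0) (at_left \<infinity>)"
      unfolding ereal_tendsto_simps
      by (rule F_lim[OF std_normal_density_at_bot], rule F_lim[OF std_normal_density_at_top])
    show "isCont (\<lambda>y. ?N y * f y * y - ?N y * f' y) y" for y
      unfolding std_normal_density_def by (intro continuous_intros f_cont cont) auto
  qed (auto intro: F_deriv[THEN has_real_derivative_iff_has_vector_derivative[THEN iffD1]])
  then have "(\<integral>y. ?N y * f y * y - ?N y * f' y \<partial>lborel) = 0"
    by (simp add: interval_lebesgue_integral_def set_lebesgue_integral_def)
  then show ?thesis using int1 int2 by simp
qed

lemma std_normal_integration_by_parts_affine:
  fixes f f' :: "real \<Rightarrow> real"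
  assumes deriv: "\<And>y. (f has_real_derivative f' y) (at y)" and cont: "\<And>y. isCont f' y"
    and f_bound: "\<And>y. \<bar>f y\<bar> \<le> C" and f'_bound: "\<And>y. \<bar>f' y\<bar> \<le> D"
  shows "(\<integral>y. std_normal_density y * f (A + \<beta> * y) * y \<partial>lborel)
       = \<beta> * (\<integral>y. std_normal_density y * f' (A + \<beta> * y) \<partial>lborel)"
proof -
  have "((\<lambda>y. f (A + \<beta> * y)) has_real_derivative f' (A + \<beta> * y) * \<beta>) (at y)" for y
    by (rule DERIV_chain2[OF deriv]) (auto intro!: derivative_eq_intros)
  then have "(\<integral>y. std_normal_density y * f (A + \<beta> * y) * y \<partial>lborel)
           = (\<integral>y. std_normal_density y * (f' (A + \<beta> * y) * \<beta>) \<partial>lborel)"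
    by (rule std_normal_integration_by_parts[where C=C and D="D * \<bar>\<beta>\<bar>"])
       (auto intro!: continuous_intros isCont_o2[OF _ cont] mult_right_mono simp: abs_mult f_bound f'_bound)
  then show ?thesis
    by (simp add: mult_ac)
qed

section \<open>The standard Gaussian on a Euclidean space\<close>

lemma gauss_pdf_eq_prod: "gauss_pdf z = (\<Prod>b\<in>Basis. std_normal_density (z \<bullet> b))"
proof -
  have "(2 * pi) powr (real DIM('a) / 2) = ((2 * pi) powr (1/2)) powr (real DIM('a))"
    by (simp add: powr_powr)
  also have "\<dots> = sqrt (2 * pi) ^ DIM('a)"
    by (simp add: powr_half_sqrt powr_realpow)
  finally have "(2 * pi) powr (- real DIM('a) / 2) = (1 / sqrt (2 * pi)) ^ DIM('a)"
    by (simp add: powr_minus_divide power_one_over)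
  moreover have "(\<Prod>b\<in>Basis. exp (- (z \<bullet> b)\<^sup>2 / 2)) = exp (- (norm z)\<^sup>2 / 2)"
  proof -
    have "(norm z)\<^sup>2 = (\<Sum>b\<in>Basis. (z \<bullet> b)\<^sup>2)"
      unfolding power2_norm_eq_inner by (subst euclidean_inner) (simp add: power2_eq_square)
    then show ?thesis by (simp add: exp_sum[symmetric] sum_negf sum_divide_distrib)
  qed
  ultimately show ?thesis
    unfolding gauss_pdf_def std_normal_density_def prod.distrib by simp
qed

lemma gauss_pdf_pos: "0 < gauss_pdf z"
  unfolding gauss_pdf_def by simp

lemma gauss_pdf_nonneg: "0 \<le> gauss_pdf z"
  using gauss_pdf_pos less_imp_le by blast

lemma borel_measurable_gauss_pdf[measurable]: "gauss_pdf \<in> borel_measurable borel"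
  unfolding gauss_pdf_def by measurable

interpretation lborel_product: product_sigma_finite "\<lambda>_. lborel :: real measure"
  by standard

lemma integral_lborel_eq_Pi:
  fixes g :: "'a::euclidean_space \<Rightarrow> 'b::{banach,second_countable_topology}"
  assumes [measurable]: "g \<in> borel_measurable borel"
  shows "integral\<^sup>L lborel g = (\<integral>x. g (\<Sum>b\<in>Basis. x b *\<^sub>R b) \<partial>(Pi\<^sub>M Basis (\<lambda>_. lborel)))"
  by (subst lborel_eq) (rule integral_distr; measurable)

lemma integrable_lborel_iff_Pi:
  fixes g :: "'a::euclidean_space \<Rightarrow> 'b::{banach,second_countable_topology}"
  assumes [measurable]: "g \<in> borel_measurable borel"
  shows "integrable lborel g = integrable (Pi\<^sub>M Basis (\<lambda>_. lborel)) (\<lambda>x. g (\<Sum>b\<in>Basis. x b *\<^sub>R b))"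
  by (subst lborel_eq) (rule integrable_distr_eq; measurable)

lemma
  fixes i :: "'a::euclidean_space"
  assumes i: "i \<in> Basis" and [measurable]: "h \<in> borel_measurable borel"
    and int: "integrable lborel (\<lambda>y. std_normal_density y * h y)"
  shows integrable_gauss_pdf_coordinate: "integrable lborel (\<lambda>z::'a. gauss_pdf z * h (z \<bullet> i))"
    and integral_gauss_pdf_coordinate:
      "(\<integral>z. gauss_pdf z * h (z \<bullet> i) \<partial>lborel) = (\<integral>y. std_normal_density y * h y \<partial>lborel)"
proof -
  define f where "f b = (if b = i then (\<lambda>y. std_normal_density y * h y) else std_normal_density)" for b :: 'a
  have eq: "gauss_pdf (\<Sum>b\<in>Basis. x b *\<^sub>R b) * h ((\<Sum>b\<in>Basis. x b *\<^sub>R b) \<bullet> i) = (\<Prod>b\<in>Basis. f b (x b))" for x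
  proof -
    have "(\<Prod>b\<in>Basis - {i}. f b (x b)) = (\<Prod>b\<in>Basis - {i}. std_normal_density (x b))"
      by (rule prod.cong) (auto simp: f_def)
    then show ?thesis
      using i by (simp add: gauss_pdf_eq_prod prod.remove f_def)
  qed
  have f_int: "integrable lborel (f b)" for b
    using int by (auto simp: f_def)
  have meas: "(\<lambda>z::'a. gauss_pdf z * h (z \<bullet> i)) \<in> borel_measurable borel" by measurable
  show "integrable lborel (\<lambda>z::'a. gauss_pdf z * h (z \<bullet> i))"
    unfolding integrable_lborel_iff_Pi[OF meas] eq
    by (rule lborel_product.product_integrable_prod) (auto intro: f_int)
  have "(\<integral>z. gauss_pdf z * h (z \<bullet> i) \<partial>lborel) = (\<Prod>b\<in>Basis. integral\<^sup>L lborel (f b))"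
    unfolding integral_lborel_eq_Pi[OF meas] eq
    by (rule lborel_product.product_integral_prod) (auto intro: f_int)
  also have "\<dots> = integral\<^sup>L lborel (f i)"
    using i by (simp add: prod.remove f_def)
  finally show "(\<integral>z. gauss_pdf z * h (z \<bullet> i) \<partial>lborel) = (\<integral>y. std_normal_density y * h y \<partial>lborel)"
    by (simp add: f_def)
qed

lemma integrable_gauss_pdf: "integrable lborel (gauss_pdf :: 'a::euclidean_space \<Rightarrow> real)"
  using integrable_gauss_pdf_coordinate[OF SOME_Basis, of "\<lambda>_. 1"] by simp

lemma integral_gauss_pdf: "(\<integral>z. gauss_pdf (z::'a::euclidean_space) \<partial>lborel) = 1"
  using integral_gauss_pdf_coordinate[OF SOME_Basis, of "\<lambda>_. 1"] by simp

lemma integrable_gauss_pdf_norm: "integrable lborel (\<lambda>z::'a::euclidean_space. gauss_pdf z * norm z)"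
proof (rule Bochner_Integration.integrable_bound)
  show "integrable lborel (\<lambda>z::'a. \<Sum>b\<in>Basis. gauss_pdf z * \<bar>z \<bullet> b\<bar>)"
    using integrable_gauss_pdf_coordinate[of _ abs] integrable_std_normal_moment_abs[of 1]
    by (intro Bochner_Integration.integrable_sum) simp
  show "AE z in lborel. norm (gauss_pdf z * norm z) \<le> norm (\<Sum>b\<in>Basis. gauss_pdf z * \<bar>z \<bullet> b\<bar>)"
    using mult_left_mono[OF norm_le_l1 gauss_pdf_nonneg]
    by (intro always_eventually allI) (simp add: gauss_pdf_nonneg sum_nonneg sum_distrib_left[symmetric])
qed simp

lemma integrable_gauss_pdf_linear_growth:
  fixes F :: "'a::euclidean_space \<Rightarrow> 'b::{banach,second_countable_topology}"
  assumes [measurable]: "F \<in> borel_measurable borel" and growth: "\<And>z. norm (F z) \<le> A + B * norm z"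
  shows "integrable lborel (\<lambda>z. gauss_pdf z *\<^sub>R F z)"
proof (rule Bochner_Integration.integrable_bound)
  show "integrable lborel (\<lambda>z. A * gauss_pdf z + B * (gauss_pdf z * norm z))"
    using integrable_gauss_pdf integrable_gauss_pdf_norm
    by (intro Bochner_Integration.integrable_add integrable_mult_right)
  show "AE z in lborel. norm (gauss_pdf z *\<^sub>R F z) \<le> norm (A * gauss_pdf z + B * (gauss_pdf z * norm z))"
  proof (intro always_eventually allI)
    fix z :: 'a
    have "norm (gauss_pdf z *\<^sub>R F z) \<le> gauss_pdf z * (A + B * norm z)"
      by (simp add: gauss_pdf_nonneg growth mult_left_mono)
    then show "norm (gauss_pdf z *\<^sub>R F z) \<le> norm (A * gauss_pdf z + B * (gauss_pdf z * norm z))"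
      by (simp add: algebra_simps)
  qed
qed simp

lemma integrable_gauss_pdf_bounded:
  fixes f :: "'a::euclidean_space \<Rightarrow> real"
  assumes [measurable]: "f \<in> borel_measurable borel" and bound: "\<And>z. \<bar>f z\<bar> \<le> C"
  shows "integrable lborel (\<lambda>z. gauss_pdf z * f z)"
  using integrable_gauss_pdf_linear_growth[where F=f and A=C and B=0] bound by simp

lemma integrable_gauss_pdf_bounded_times_coordinate:
  fixes g :: "'a::euclidean_space \<Rightarrow> real"
  assumes i: "i \<in> Basis" and [measurable]: "g \<in> borel_measurable borel" and bound: "\<And>z. \<bar>g z\<bar> \<le> C"
  shows "integrable lborel (\<lambda>z. gauss_pdf z * g z * (z \<bullet> i))"
proof -
  have "integrable lborel (\<lambda>z. gauss_pdf z *\<^sub>R (g z * (z \<bullet> i)))"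
  proof (rule integrable_gauss_pdf_linear_growth[where A=0 and B="\<bar>C\<bar>"])
    fix z :: 'a
    have "\<bar>g z\<bar> * \<bar>z \<bullet> i\<bar> \<le> \<bar>C\<bar> * norm z"
      by (rule mult_mono) (use bound[of z] Basis_le_norm[OF i, of z] in auto)
    then show "norm (g z * (z \<bullet> i)) \<le> 0 + \<bar>C\<bar> * norm z"
      by (simp add: abs_mult)
  qed measurable
  then show ?thesis
    by (simp add: mult.assoc)
qed

lemma integral_gauss_pdf_scaleR_id: "(\<integral>z. gauss_pdf z *\<^sub>R z \<partial>lborel) = (0::'a::euclidean_space)"
proof (rule euclidean_eqI)
  fix i :: 'a assume i: "i \<in> Basis"
  have "integrable lborel (\<lambda>z::'a. gauss_pdf z *\<^sub>R z)"
    by (rule integrable_gauss_pdf_linear_growth[where A=0 and B=1]) auto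
  then have "(\<integral>z. gauss_pdf z *\<^sub>R z \<partial>lborel) \<bullet> i = (\<integral>z. gauss_pdf z * (z \<bullet> i) \<partial>lborel)"
    by (simp flip: integral_inner_left)
  also have "\<dots> = 0"
    using integral_gauss_pdf_coordinate[OF i, of "\<lambda>y. y"] integrable_std_normal_moment[of 1]
      integral_std_normal_moment_odd[of 0] by simp
  finally show "(\<integral>z. gauss_pdf z *\<^sub>R z \<partial>lborel) \<bullet> i = 0 \<bullet> i" by simp
qed

lemma integral_gauss_pdf_pos:
  fixes f :: "'a::euclidean_space \<Rightarrow> real"
  assumes int: "integrable lborel (\<lambda>z. gauss_pdf z * f z)" and pos: "\<And>z. 0 < f z"
  shows "0 < (\<integral>z. gauss_pdf z * f z \<partial>lborel)"
proof -
  have nonneg: "AE z in lborel. 0 \<le> gauss_pdf z * f z"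
    using pos by (simp add: gauss_pdf_nonneg less_imp_le)
  have "\<not> (AE z in lborel. gauss_pdf z * f z = 0)"
  proof
    assume "AE z in lborel. gauss_pdf z * f z = 0"
    then have "AE z in (lborel :: 'a measure). False"
      by eventually_elim (metis pos gauss_pdf_pos mult_pos_pos less_irrefl)
    then have "ae_filter (lborel :: 'a measure) = bot"
      using trivial_limit_def by blast
    then show False by (simp add: ae_filter_eq_bot_iff)
  qed
  then show ?thesis
    using integral_nonneg_eq_0_iff_AE[OF int nonneg] integral_nonneg_AE[OF nonneg] by linarith
qed

lemma integral_lborel_split_coordinate:
  fixes g :: "'a::euclidean_space \<Rightarrow> real"
  assumes i: "i \<in> Basis" and [measurable]: "g \<in> borel_measurable borel" and int: "integrable lborel g"
  shows "integral\<^sup>L lborel g =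
    (\<integral>x. (\<integral>y. g ((\<Sum>b\<in>Basis - {i}. x b *\<^sub>R b) + y *\<^sub>R i) \<partial>lborel) \<partial>(Pi\<^sub>M (Basis - {i}) (\<lambda>_. lborel)))"
proof -
  have Basis_eq: "insert i (Basis - {i}) = Basis" using i by auto
  have sum_eq: "(\<Sum>b\<in>Basis. (x(i:=y)) b *\<^sub>R b) = (\<Sum>b\<in>Basis - {i}. x b *\<^sub>R b) + y *\<^sub>R i" for x y
  proof -
    have "(\<Sum>b\<in>Basis - {i}. (x(i:=y)) b *\<^sub>R b) = (\<Sum>b\<in>Basis - {i}. x b *\<^sub>R b)"
      by (rule sum.cong) auto
    then show ?thesis using i by (simp add: sum.remove add.commute)
  qed
  have "integrable (Pi\<^sub>M (insert i (Basis - {i})) (\<lambda>_. lborel)) (\<lambda>x. g (\<Sum>b\<in>Basis. x b *\<^sub>R b))"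
    using int unfolding Basis_eq integrable_lborel_iff_Pi[of g, OF \<open>g \<in> borel_measurable borel\<close>] .
  from lborel_product.product_integral_insert[OF _ _ this] show ?thesis
    unfolding Basis_eq integral_lborel_eq_Pi[of g, OF \<open>g \<in> borel_measurable borel\<close>] sum_eq by simp
qed

lemma
  fixes i :: "'a::euclidean_space" and x :: "'a \<Rightarrow> real"
  assumes i: "i \<in> Basis"
  defines "S \<equiv> (\<Sum>b\<in>Basis - {i}. x b *\<^sub>R b)"
  shows gauss_pdf_split_coordinate:
      "gauss_pdf (S + y *\<^sub>R i) = (\<Prod>b\<in>Basis - {i}. std_normal_density (x b)) * std_normal_density y"
    and inner_split_coordinate: "(S + y *\<^sub>R i) \<bullet> i = y"
proof -
  have S_inner: "S \<bullet> b = (if b = i then 0 else x b)" if "b \<in> Basis" for b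
  proof -
    have "S \<bullet> b = (\<Sum>b'\<in>Basis - {i}. x b' * (b' \<bullet> b))"
      unfolding S_def inner_sum_left by simp
    also have "\<dots> = (\<Sum>b'\<in>Basis - {i}. if b' = b then x b else 0)"
      using that by (intro sum.cong) (auto simp: inner_not_same_Basis)
    finally show ?thesis using that by (simp add: sum.delta)
  qed
  show coord: "(S + y *\<^sub>R i) \<bullet> i = y"
    using S_inner[OF i] i by (simp add: inner_add_left)
  have "(\<Prod>b\<in>Basis - {i}. std_normal_density ((S + y *\<^sub>R i) \<bullet> b)) = (\<Prod>b\<in>Basis - {i}. std_normal_density (x b))"
    by (rule prod.cong) (auto simp: inner_add_left S_inner inner_not_same_Basis i)
  then show "gauss_pdf (S + y *\<^sub>R i) = (\<Prod>b\<in>Basis - {i}. std_normal_density (x b)) * std_normal_density y"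
    using i coord by (simp add: gauss_pdf_eq_prod prod.remove mult.commute)
qed

text \<open>Integrating first along the coordinate \<open>i\<close>, this is the one-dimensional identity
  \<open>std_normal_integration_by_parts_affine\<close> on every line parallel to \<open>i\<close>.\<close>
lemma integral_gauss_pdf_ridge_times_coordinate:
  fixes f f' :: "real \<Rightarrow> real" and w i :: "'a::euclidean_space"
  assumes i: "i \<in> Basis"
    and deriv: "\<And>y. (f has_real_derivative f' y) (at y)" and cont: "\<And>y. isCont f' y"
    and f_bound: "\<And>y. \<bar>f y\<bar> \<le> C" and f'_bound: "\<And>y. \<bar>f' y\<bar> \<le> D"
  shows "(\<integral>z. gauss_pdf z * f (z \<bullet> w + c) * (z \<bullet> i) \<partial>lborel)
       = (w \<bullet> i) * (\<integral>z. gauss_pdf z * f' (z \<bullet> w + c) \<partial>lborel)"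
proof -
  have [measurable]: "f \<in> borel_measurable borel" "f' \<in> borel_measurable borel"
    using DERIV_isCont[OF deriv] cont
    by (auto intro!: borel_measurable_continuous_onI continuous_at_imp_continuous_on)
  define G where "G z = gauss_pdf z * f (z \<bullet> w + c) * (z \<bullet> i)" for z
  define H where "H z = gauss_pdf z * f' (z \<bullet> w + c)" for z
  define S where "S x = (\<Sum>b\<in>Basis - {i}. x b *\<^sub>R b)" for x :: "'a \<Rightarrow> real"
  define P where "P x = (\<Prod>b\<in>Basis - {i}. std_normal_density (x b))" for x :: "'a \<Rightarrow> real"
  define \<beta> where "\<beta> = w \<bullet> i"
  have [measurable]: "G \<in> borel_measurable borel" "H \<in> borel_measurable borel"
    unfolding G_def H_def by measurable
  have G_int: "integrable lborel G"
    unfolding G_def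
    by (rule integrable_gauss_pdf_bounded_times_coordinate[OF i, where g="\<lambda>z. f (z \<bullet> w + c)" and C=C])
       (measurable, rule f_bound)
  have H_int: "integrable lborel H"
    unfolding H_def by (rule integrable_gauss_pdf_bounded[OF _ f'_bound]) measurable
  have slice: "(\<integral>y. G (S x + y *\<^sub>R i) \<partial>lborel) = \<beta> * (\<integral>y. H (S x + y *\<^sub>R i) \<partial>lborel)" for x
  proof -
    define A where "A = S x \<bullet> w + c"
    have arg: "(S x + y *\<^sub>R i) \<bullet> w + c = A + \<beta> * y" for y
      by (simp add: A_def \<beta>_def inner_add_left inner_commute[of i w])
    have "G (S x + y *\<^sub>R i) = P x * (std_normal_density y * f (A + \<beta> * y) * y)"
      and "H (S x + y *\<^sub>R i) = P x * (std_normal_density y * (f' (A + \<beta> * y)))" for y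
      unfolding G_def H_def S_def P_def gauss_pdf_split_coordinate[OF i] inner_split_coordinate[OF i]
        arg[unfolded S_def] by simp_all
    then show ?thesis
      by (simp only: integral_mult_right_zero std_normal_integration_by_parts_affine[OF deriv cont f_bound f'_bound])
         (simp add: mult_ac)
  qed
  have "integral\<^sup>L lborel G = (\<integral>x. (\<integral>y. G (S x + y *\<^sub>R i) \<partial>lborel) \<partial>(Pi\<^sub>M (Basis - {i}) (\<lambda>_. lborel)))"
    unfolding S_def by (rule integral_lborel_split_coordinate[OF i _ G_int]) measurable
  also have "\<dots> = \<beta> * (\<integral>x. (\<integral>y. H (S x + y *\<^sub>R i) \<partial>lborel) \<partial>(Pi\<^sub>M (Basis - {i}) (\<lambda>_. lborel)))"
    by (simp add: slice)
  also have "\<dots> = \<beta> * integral\<^sup>L lborel H"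
    unfolding S_def by (subst integral_lborel_split_coordinate[OF i _ H_int]) simp_all
  finally show ?thesis unfolding G_def H_def \<beta>_def .
qed

lemma integral_gauss_pdf_ridge_scaleR_id:
  fixes f f' :: "real \<Rightarrow> real" and w :: "'a::euclidean_space"
  assumes deriv: "\<And>y. (f has_real_derivative f' y) (at y)" and cont: "\<And>y. isCont f' y"
    and f_bound: "\<And>y. \<bar>f y\<bar> \<le> C" and f'_bound: "\<And>y. \<bar>f' y\<bar> \<le> D"
  shows "(\<integral>z. gauss_pdf z *\<^sub>R (f (z \<bullet> w + c) *\<^sub>R z) \<partial>lborel)
       = (\<integral>z. gauss_pdf z * f' (z \<bullet> w + c) \<partial>lborel) *\<^sub>R w"
proof (rule euclidean_eqI)
  fix i :: 'a assume i: "i \<in> Basis"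
  have [measurable]: "f \<in> borel_measurable borel"
    using DERIV_isCont[OF deriv] by (auto intro!: borel_measurable_continuous_onI continuous_at_imp_continuous_on)
  have "integrable lborel (\<lambda>z. gauss_pdf z *\<^sub>R (f (z \<bullet> w + c) *\<^sub>R z))"
  proof (rule integrable_gauss_pdf_linear_growth[where A=0 and B="\<bar>C\<bar>"])
    show "norm (f (z \<bullet> w + c) *\<^sub>R z) \<le> 0 + \<bar>C\<bar> * norm z" for z
      using f_bound[of "z \<bullet> w + c"] by (simp add: mult_right_mono)
  qed measurable
  then have "(\<integral>z. gauss_pdf z *\<^sub>R (f (z \<bullet> w + c) *\<^sub>R z) \<partial>lborel) \<bullet> i
      = (\<integral>z. gauss_pdf z * f (z \<bullet> w + c) * (z \<bullet> i) \<partial>lborel)"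
    by (simp flip: integral_inner_left add: mult.assoc)
  also have "\<dots> = (w \<bullet> i) * (\<integral>z. gauss_pdf z * f' (z \<bullet> w + c) \<partial>lborel)"
    by (rule integral_gauss_pdf_ridge_times_coordinate[OF i deriv cont f_bound f'_bound])
  finally show "(\<integral>z. gauss_pdf z *\<^sub>R (f (z \<bullet> w + c) *\<^sub>R z) \<partial>lborel) \<bullet> i
      = ((\<integral>z. gauss_pdf z * f' (z \<bullet> w + c) \<partial>lborel) *\<^sub>R w) \<bullet> i"
    by simp
qed

lemma
  fixes F :: "'a::euclidean_space \<Rightarrow> 'b::{banach,second_countable_topology}"
  assumes [measurable]: "F \<in> borel_measurable borel"
  shows integral_gauss_pdf_shift:
      "(\<integral>y. gauss_pdf (y - m) *\<^sub>R F y \<partial>lborel) = (\<integral>z. gauss_pdf z *\<^sub>R F (z + m) \<partial>lborel)"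
    and integrable_gauss_pdf_shift_iff:
      "integrable lborel (\<lambda>y. gauss_pdf (y - m) *\<^sub>R F y) \<longleftrightarrow> integrable lborel (\<lambda>z. gauss_pdf z *\<^sub>R F (z + m))"
proof -
  have "(\<integral>y. gauss_pdf (y - m) *\<^sub>R F y \<partial>distr lborel borel ((+) m)) = (\<integral>z. gauss_pdf (m + z - m) *\<^sub>R F (m + z) \<partial>lborel)"
    by (rule integral_distr) measurable
  then show "(\<integral>y. gauss_pdf (y - m) *\<^sub>R F y \<partial>lborel) = (\<integral>z. gauss_pdf z *\<^sub>R F (z + m) \<partial>lborel)"
    by (simp add: lborel_distr_plus add.commute[of m])
  have "integrable (distr lborel borel ((+) m)) (\<lambda>y. gauss_pdf (y - m) *\<^sub>R F y)
      \<longleftrightarrow> integrable lborel (\<lambda>z. gauss_pdf (m + z - m) *\<^sub>R F (m + z))"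
    by (rule integrable_distr_eq) measurable
  then show "integrable lborel (\<lambda>y. gauss_pdf (y - m) *\<^sub>R F y) \<longleftrightarrow> integrable lborel (\<lambda>z. gauss_pdf z *\<^sub>R F (z + m))"
    by (simp add: lborel_distr_plus add.commute[of m])
qed

section \<open>Logistic posterior weights and the EM map\<close>

definition logistic :: "real \<Rightarrow> real" where
  "logistic x = 1 / (1 + exp (- x))"

lemma logistic_pos: "0 < logistic x"
  unfolding logistic_def by (simp add: add_pos_pos)

lemma logistic_less_one: "logistic x < 1"
  unfolding logistic_def by (simp add: add_pos_pos)

lemma logistic_minus: "logistic (- x) = 1 - logistic x"
proof -
  have "1 + exp x \<noteq> 0" using exp_gt_zero[of x] by linarith
  then show ?thesis unfolding logistic_def by (simp add: exp_minus field_simps)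
qed

lemma logistic_mono: "x \<le> y \<Longrightarrow> logistic x \<le> logistic y"
  unfolding logistic_def by (simp add: frac_le add_pos_pos)

lemma logistic_gt_half: "0 < x \<Longrightarrow> 1/2 < logistic x"
  unfolding logistic_def by (simp add: field_simps add_pos_pos)

lemma has_real_derivative_logistic:
  "(logistic has_real_derivative logistic x * (1 - logistic x)) (at x)"
proof -
  have "1 + exp (- x) \<noteq> 0" using exp_gt_zero[of "- x"] by linarith
  then show ?thesis
    unfolding logistic_def
    by (auto intro!: derivative_eq_intros simp: field_simps power2_eq_square exp_minus)
qed

lemma isCont_logistic[continuous_intros]: "isCont logistic x"
  by (rule DERIV_isCont[OF has_real_derivative_logistic])

lemma borel_measurable_logistic[measurable]: "logistic \<in> borel_measurable borel"
  by (intro borel_measurable_continuous_onI continuous_at_imp_continuous_on ballI isCont_logistic)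

lemma v_d_eq_logistic: "v_d y (m - b) (m + b) = logistic (- 2 * ((y - m) \<bullet> b))"
proof -
  define x where "x = y - m"
  define A where "A = - ((norm x)\<^sup>2 + (norm b)\<^sup>2) / 2"
  define K where "K = (2 * pi) powr (- real DIM('a) / 2) * exp A"
  have "K > 0" unfolding K_def by simp
  have "(norm (x + b))\<^sup>2 = (norm x)\<^sup>2 + 2 * (x \<bullet> b) + (norm b)\<^sup>2"
    by (simp add: power2_norm_eq_inner inner_add_left inner_add_right inner_commute)
  moreover have "(norm (x - b))\<^sup>2 = (norm x)\<^sup>2 - 2 * (x \<bullet> b) + (norm b)\<^sup>2"
    by (simp add: power2_norm_eq_inner inner_diff_left inner_diff_right inner_commute)
  ultimately have "- (norm (x + b))\<^sup>2 / 2 = A + - (x \<bullet> b)" "- (norm (x - b))\<^sup>2 / 2 = A + x \<bullet> b"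
    unfolding A_def by simp_all
  moreover have "y - (m - b) = x + b" "y - (m + b) = x - b"
    by (simp_all add: x_def algebra_simps)
  ultimately have "gauss_pdf (y - (m - b)) = K * exp (- (x \<bullet> b))" "gauss_pdf (y - (m + b)) = K * exp (x \<bullet> b)"
    unfolding gauss_pdf_def K_def by (simp_all only: exp_add mult.assoc)
  then have "v_d y (m - b) (m + b) = (K * exp (- (x \<bullet> b))) / (K * (exp (- (x \<bullet> b)) + exp (x \<bullet> b)))"
    unfolding v_d_def by (simp only: distrib_left)
  also have "\<dots> = exp (- (x \<bullet> b)) / (exp (- (x \<bullet> b)) + exp (x \<bullet> b))"
    using \<open>K > 0\<close> by (intro mult_divide_mult_cancel_left) linarith
  also have "\<dots> = (exp (- (x \<bullet> b)) * 1) / (exp (- (x \<bullet> b)) * (1 + exp (2 * (x \<bullet> b))))"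
  proof -
    have "exp (x \<bullet> b) = exp (- (x \<bullet> b)) * exp (2 * (x \<bullet> b))"
      by (simp flip: exp_add)
    then show ?thesis by (simp only: distrib_left mult_1_right)
  qed
  also have "\<dots> = 1 / (1 + exp (2 * (x \<bullet> b)))"
    by (intro mult_divide_mult_cancel_left) simp
  finally show ?thesis unfolding logistic_def x_def by simp
qed

lemma v_d_nonneg: "0 \<le> v_d y m1 m2" and v_d_le_one: "v_d y m1 m2 \<le> 1"
  unfolding v_d_def by (simp_all add: gauss_pdf_nonneg gauss_pdf_pos add_pos_pos)

lemma
  fixes F :: "'a::euclidean_space \<Rightarrow> 'b::{banach,second_countable_topology}"
  assumes [measurable]: "F \<in> borel_measurable borel" and growth: "\<And>y. norm (F y) \<le> C * (1 + norm y)"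
  shows integrable_mix_pdf: "integrable lborel (\<lambda>y. mix_pdf m1s m2s y *\<^sub>R F y)"
    and mix_expect_eq_shift: "mix_expect m1s m2s F =
      (1/2) *\<^sub>R (\<integral>z. gauss_pdf z *\<^sub>R F (z + m1s) \<partial>lborel) + (1/2) *\<^sub>R (\<integral>z. gauss_pdf z *\<^sub>R F (z + m2s) \<partial>lborel)"
proof -
  have "0 \<le> C" using growth[of 0] norm_ge_zero[of "F 0"] by (simp del: norm_ge_zero)
  have int: "integrable lborel (\<lambda>y. gauss_pdf (y - m) *\<^sub>R F y)" for m
    unfolding integrable_gauss_pdf_shift_iff[OF \<open>F \<in> _\<close>]
  proof (rule integrable_gauss_pdf_linear_growth[where A="C * (1 + norm m)" and B=C])
    show "norm (F (z + m)) \<le> C * (1 + norm m) + C * norm z" for z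
      using growth[of "z + m"] mult_left_mono[OF norm_triangle_ineq[of z m] \<open>0 \<le> C\<close>]
      by (simp add: algebra_simps)
  qed measurable
  have mix: "mix_pdf m1s m2s y *\<^sub>R F y = (1/2) *\<^sub>R (gauss_pdf (y - m1s) *\<^sub>R F y) + (1/2) *\<^sub>R (gauss_pdf (y - m2s) *\<^sub>R F y)" for y
    by (simp add: mix_pdf_def scaleR_add_left)
  show "integrable lborel (\<lambda>y. mix_pdf m1s m2s y *\<^sub>R F y)"
    unfolding mix by (intro Bochner_Integration.integrable_add integrable_scaleR_right int)
  show "mix_expect m1s m2s F =
      (1/2) *\<^sub>R (\<integral>z. gauss_pdf z *\<^sub>R F (z + m1s) \<partial>lborel) + (1/2) *\<^sub>R (\<integral>z. gauss_pdf z *\<^sub>R F (z + m2s) \<partial>lborel)"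
    unfolding mix_expect_def mix
    by (simp only: Bochner_Integration.integral_add[OF integrable_scaleR_right[OF int] integrable_scaleR_right[OF int]]
        integral_scaleR_right integral_gauss_pdf_shift[OF \<open>F \<in> _\<close>])
qed

lemma mix_expect_diff:
  fixes F G :: "'a::euclidean_space \<Rightarrow> 'b::{banach,second_countable_topology}"
  assumes [measurable]: "F \<in> borel_measurable borel" "G \<in> borel_measurable borel"
    and "\<And>y. norm (F y) \<le> C * (1 + norm y)" "\<And>y. norm (G y) \<le> C * (1 + norm y)"
  shows "mix_expect m1s m2s (\<lambda>y. F y - G y) = mix_expect m1s m2s F - mix_expect m1s m2s G"
  unfolding mix_expect_def scaleR_diff_right
  using integrable_mix_pdf[of F C m1s m2s] integrable_mix_pdf[of G C m1s m2s] assms by simp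

lemma mix_expect_one: "mix_expect m1s m2s (\<lambda>_. 1::real) = 1"
  using mix_expect_eq_shift[of "\<lambda>_. 1::real" 1] by (simp add: integral_gauss_pdf flip: scaleR_add_left)

lemma mix_expect_id: "mix_expect m1s m2s (\<lambda>y. y) = (m1s + m2s) /\<^sub>R 2"
proof -
  have "(\<integral>z. gauss_pdf z *\<^sub>R (z + m) \<partial>lborel) = m" for m :: 'a
  proof -
    have "integrable lborel (\<lambda>z::'a. gauss_pdf z *\<^sub>R z)"
      by (rule integrable_gauss_pdf_linear_growth[of _ 0 1]) auto
    moreover have "integrable lborel (\<lambda>z::'a. gauss_pdf z *\<^sub>R m)"
      by (rule integrable_scaleR_left) (rule integrable_gauss_pdf)
    ultimately show ?thesis
      using integral_scaleR_left[OF integrable_gauss_pdf, of m]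
      by (simp add: scaleR_add_right integral_gauss_pdf_scaleR_id integral_gauss_pdf)
  qed
  then show ?thesis
    using mix_expect_eq_shift[of "\<lambda>y. y" 1 m1s m2s] by (simp add: scaleR_add_right)
qed

text \<open>With the current iterate written as \<open>(c + a - b, c + a + b)\<close>, where \<open>c\<close> is the true centre
  and \<open>b \<bottom> \<theta>\<^sup>*\<close>, the posterior weight of the first component at \<open>y = z + \<mu>\<^sub>i\<^sup>*\<close> is
  \<open>resp b (a \<bullet> b) z\<close> for both \<open>i = 1, 2\<close>.\<close>
definition resp :: "'a::euclidean_space \<Rightarrow> real \<Rightarrow> 'a \<Rightarrow> real" where
  "resp b \<kappa> z = logistic (2 * \<kappa> - 2 * (z \<bullet> b))"

definition resp_mass :: "'a::euclidean_space \<Rightarrow> real \<Rightarrow> real" where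
  "resp_mass b \<kappa> = (\<integral>z. gauss_pdf z * resp b \<kappa> z \<partial>lborel)"

definition resp_info :: "'a::euclidean_space \<Rightarrow> real \<Rightarrow> real" where
  "resp_info b \<kappa> = (\<integral>z. gauss_pdf z * (resp b \<kappa> z * (1 - resp b \<kappa> z)) \<partial>lborel)"

definition em_contraction :: "'a::euclidean_space \<Rightarrow> real \<Rightarrow> real" where
  "em_contraction b \<kappa> = resp_info b \<kappa> / resp_mass b \<kappa> + resp_info b \<kappa> / (1 - resp_mass b \<kappa>)"

definition em_drift :: "'a::euclidean_space \<Rightarrow> real \<Rightarrow> real" where
  "em_drift b \<kappa> = resp_info b \<kappa> / (1 - resp_mass b \<kappa>) - resp_info b \<kappa> / resp_mass b \<kappa>"

lemma resp_pos: "0 < resp b \<kappa> z" and resp_less_one: "resp b \<kappa> z < 1"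
  unfolding resp_def by (rule logistic_pos, rule logistic_less_one)

lemma borel_measurable_resp[measurable]: "resp b \<kappa> \<in> borel_measurable borel"
  unfolding resp_def by measurable

lemma integrable_gauss_pdf_resp: "integrable lborel (\<lambda>z. gauss_pdf z * resp b \<kappa> z)"
  by (rule integrable_gauss_pdf_bounded[where C=1]) (auto simp: abs_le_iff less_imp_le resp_pos resp_less_one)

lemma resp_mass_pos: "0 < resp_mass b \<kappa>"
  unfolding resp_mass_def by (rule integral_gauss_pdf_pos[OF integrable_gauss_pdf_resp resp_pos])

lemma resp_mass_less_one: "resp_mass b \<kappa> < 1"
proof -
  have int: "integrable lborel (\<lambda>z. gauss_pdf z * (1 - resp b \<kappa> z))"
    by (rule integrable_gauss_pdf_bounded[where C=1]) (auto simp: abs_le_iff less_imp_le resp_pos resp_less_one)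
  have "0 < (\<integral>z. gauss_pdf z * (1 - resp b \<kappa> z) \<partial>lborel)"
    by (rule integral_gauss_pdf_pos[OF int]) (simp add: resp_less_one)
  also have "\<dots> = 1 - resp_mass b \<kappa>"
    using Bochner_Integration.integral_diff[OF integrable_gauss_pdf integrable_gauss_pdf_resp]
    by (simp add: right_diff_distrib integral_gauss_pdf resp_mass_def)
  finally show ?thesis by simp
qed

lemma resp_info_nonneg: "0 \<le> resp_info b \<kappa>"
  unfolding resp_info_def
  by (rule integral_nonneg_AE) (simp add: gauss_pdf_nonneg less_imp_le resp_pos resp_less_one)

lemma integral_gauss_pdf_resp_scaleR:
  "(\<integral>z. gauss_pdf z *\<^sub>R (resp b \<kappa> z *\<^sub>R (z + m)) \<partial>lborel) = resp_mass b \<kappa> *\<^sub>R m - (2 * resp_info b \<kappa>) *\<^sub>R b"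
proof -
  have resp_ridge: "resp b \<kappa> z = logistic (z \<bullet> (- 2 *\<^sub>R b) + 2 * \<kappa>)" for z
    unfolding resp_def by (simp add: algebra_simps)
  have "\<bar>logistic y\<bar> \<le> 1" "\<bar>logistic y * (1 - logistic y)\<bar> \<le> 1" for y
    using logistic_pos[of y] logistic_less_one[of y] by (auto simp: abs_le_iff mult_le_one)
  then have stein: "(\<integral>z. gauss_pdf z *\<^sub>R (resp b \<kappa> z *\<^sub>R z) \<partial>lborel) = (- 2 * resp_info b \<kappa>) *\<^sub>R b"
    unfolding resp_ridge resp_info_def
    by (subst integral_gauss_pdf_ridge_scaleR_id[where C=1 and D=1])
       (auto intro: has_real_derivative_logistic intro!: continuous_intros)
  have int: "integrable lborel (\<lambda>z. gauss_pdf z *\<^sub>R (resp b \<kappa> z *\<^sub>R z))"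
    by (rule integrable_gauss_pdf_linear_growth[where A=0 and B=1])
       (auto simp: mult_left_le_one_le less_imp_le resp_pos resp_less_one)
  have "(\<integral>z. gauss_pdf z *\<^sub>R (resp b \<kappa> z *\<^sub>R (z + m)) \<partial>lborel)
      = (\<integral>z. gauss_pdf z *\<^sub>R (resp b \<kappa> z *\<^sub>R z) + (gauss_pdf z * resp b \<kappa> z) *\<^sub>R m \<partial>lborel)"
    by (simp add: scaleR_add_right)
  also have "\<dots> = (\<integral>z. gauss_pdf z *\<^sub>R (resp b \<kappa> z *\<^sub>R z) \<partial>lborel) + resp_mass b \<kappa> *\<^sub>R m"
    unfolding resp_mass_def
    by (subst Bochner_Integration.integral_add[OF int integrable_scaleR_left[OF integrable_gauss_pdf_resp]])
       (simp add: integrable_gauss_pdf_resp)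
  finally show ?thesis
    using stein by simp
qed

lemma
  fixes m1s m2s a b :: "'a::euclidean_space"
  defines "c \<equiv> (m1s + m2s) /\<^sub>R 2"
  assumes orth: "b \<bullet> (m2s - m1s) = 0"
  shows mix_expect_v_d_reparam:
      "mix_expect m1s m2s (\<lambda>y. v_d y (c + a - b) (c + a + b)) = resp_mass b (a \<bullet> b)"
    and mix_expect_v_d_scaleR_reparam:
      "mix_expect m1s m2s (\<lambda>y. v_d y (c + a - b) (c + a + b) *\<^sub>R y)
         = resp_mass b (a \<bullet> b) *\<^sub>R c - (2 * resp_info b (a \<bullet> b)) *\<^sub>R b"
proof -
  define v where "v y = v_d y (c + a - b) (c + a + b)" for y
  have v_eq: "v y = logistic (- 2 * ((y - (c + a)) \<bullet> b))" for y
    using v_d_eq_logistic[of y "c + a" b] by (simp add: v_def algebra_simps)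
  have proj: "(z + m1s - (c + a)) \<bullet> b = z \<bullet> b - a \<bullet> b" "(z + m2s - (c + a)) \<bullet> b = z \<bullet> b - a \<bullet> b" for z
    using orth by (simp_all add: c_def algebra_simps inner_diff_right inner_add_left inner_diff_left
        inner_commute[of b] scaleR_add_right inner_add_right)
  have v_shift: "v (z + m1s) = resp b (a \<bullet> b) z" "v (z + m2s) = resp b (a \<bullet> b) z" for z
    unfolding v_eq resp_def proj by (simp_all add: algebra_simps)
  have [measurable]: "v \<in> borel_measurable borel"
    unfolding v_eq by measurable
  have v_bounds: "0 \<le> v y" "v y \<le> 1" for y
    unfolding v_def by (rule v_d_nonneg, rule v_d_le_one)
  have growth: "norm (v y) \<le> 1 * (1 + norm y)" "norm (v y *\<^sub>R y) \<le> 1 * (1 + norm y)" for y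
    using v_bounds[of y] mult_left_le_one_le[of "norm y" "v y"] norm_ge_zero[of y]
    by (auto simp del: norm_ge_zero)
  show "mix_expect m1s m2s (\<lambda>y. v_d y (c + a - b) (c + a + b)) = resp_mass b (a \<bullet> b)"
    using mix_expect_eq_shift[OF _ growth(1)]
    by (simp add: v_def[symmetric] v_shift resp_mass_def flip: scaleR_add_left)
  have "mix_expect m1s m2s (\<lambda>y. v y *\<^sub>R y)
      = (1/2) *\<^sub>R (resp_mass b (a \<bullet> b) *\<^sub>R m1s - (2 * resp_info b (a \<bullet> b)) *\<^sub>R b)
      + (1/2) *\<^sub>R (resp_mass b (a \<bullet> b) *\<^sub>R m2s - (2 * resp_info b (a \<bullet> b)) *\<^sub>R b)"
    by (subst mix_expect_eq_shift[OF _ growth(2)], measurable, simp only: v_shift integral_gauss_pdf_resp_scaleR)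
  then show "mix_expect m1s m2s (\<lambda>y. v_d y (c + a - b) (c + a + b) *\<^sub>R y)
      = resp_mass b (a \<bullet> b) *\<^sub>R c - (2 * resp_info b (a \<bullet> b)) *\<^sub>R b"
    by (simp add: v_def c_def algebra_simps flip: scaleR_add_left)
qed

lemma em_step_reparam:
  fixes m1s m2s a b :: "'a::euclidean_space"
  defines "c \<equiv> (m1s + m2s) /\<^sub>R 2"
  assumes orth: "b \<bullet> (m2s - m1s) = 0"
  shows "em_step m1s m2s (c + a - b, c + a + b) =
    (c + (em_drift b (a \<bullet> b) - em_contraction b (a \<bullet> b)) *\<^sub>R b,
     c + (em_drift b (a \<bullet> b) + em_contraction b (a \<bullet> b)) *\<^sub>R b)"
proof -
  define p where "p = resp_mass b (a \<bullet> b)"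
  define q where "q = resp_info b (a \<bullet> b)"
  define v where "v y = v_d y (c + a - b) (c + a + b)" for y
  have [measurable]: "v \<in> borel_measurable borel"
    unfolding v_def v_d_def by measurable
  have v_bounds: "0 \<le> v y" "v y \<le> 1" for y
    unfolding v_def by (rule v_d_nonneg, rule v_d_le_one)
  have growth: "norm (v y) \<le> 1 * (1 + norm y)" "norm (v y *\<^sub>R y) \<le> 1 * (1 + norm y)"
    "norm (1::real) \<le> 1 * (1 + norm y)" "norm y \<le> 1 * (1 + norm y)" for y
    using v_bounds[of y] mult_left_le_one_le[of "norm y" "v y"] norm_ge_zero[of y]
    by (auto simp del: norm_ge_zero)
  have E_v: "mix_expect m1s m2s v = p"
    unfolding v_def[abs_def] p_def c_def by (rule mix_expect_v_d_reparam[OF orth])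
  have E_vy: "mix_expect m1s m2s (\<lambda>y. v y *\<^sub>R y) = p *\<^sub>R c - (2 * q) *\<^sub>R b"
    unfolding v_def p_def q_def c_def by (rule mix_expect_v_d_scaleR_reparam[OF orth])
  have E_1v: "mix_expect m1s m2s (\<lambda>y. 1 - v y) = 1 - p"
    using mix_expect_diff[OF _ _ growth(3,1), of m1s m2s] by (simp add: mix_expect_one E_v)
  have "mix_expect m1s m2s (\<lambda>y. (1 - v y) *\<^sub>R y) = mix_expect m1s m2s (\<lambda>y. y) - mix_expect m1s m2s (\<lambda>y. v y *\<^sub>R y)"
    using mix_expect_diff[OF _ _ growth(4,2), of m1s m2s] by (simp add: scaleR_diff_left)
  also have "\<dots> = (1 - p) *\<^sub>R c + (2 * q) *\<^sub>R b"
    unfolding mix_expect_id E_vy c_def[symmetric] by (simp add: algebra_simps)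
  finally have E_1vy: "mix_expect m1s m2s (\<lambda>y. (1 - v y) *\<^sub>R y) = (1 - p) *\<^sub>R c + (2 * q) *\<^sub>R b" .
  have "p \<noteq> 0" "1 - p \<noteq> 0"
    using resp_mass_pos[of b "a \<bullet> b"] resp_mass_less_one[of b "a \<bullet> b"] by (simp_all add: p_def)
  then have "(1 / p) *\<^sub>R (p *\<^sub>R c - (2 * q) *\<^sub>R b) = c + (- 2 * (q / p)) *\<^sub>R b"
    and "(1 / (1 - p)) *\<^sub>R ((1 - p) *\<^sub>R c + (2 * q) *\<^sub>R b) = c + (2 * (q / (1 - p))) *\<^sub>R b"
    by (simp_all only: scaleR_add_right scaleR_diff_right scaleR_scaleR) simp_all
  moreover have "q / (1 - p) - q / p - (q / p + q / (1 - p)) = - 2 * (q / p)"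
    and "q / (1 - p) - q / p + (q / p + q / (1 - p)) = 2 * (q / (1 - p))"
    by simp_all
  ultimately show ?thesis
    unfolding em_step_def em_drift_def em_contraction_def
    by (simp add: E_v E_vy E_1v E_1vy flip: v_def p_def q_def)
qed

lemma em_step_reparam_pair:
  fixes m1s m2s \<nu> \<omega> :: "'a::euclidean_space"
  defines "c \<equiv> (m1s + m2s) /\<^sub>R 2" and "a \<equiv> (\<nu> + \<omega>) /\<^sub>R 2 - (m1s + m2s) /\<^sub>R 2" and "b \<equiv> (\<omega> - \<nu>) /\<^sub>R 2"
  assumes "b \<bullet> (m2s - m1s) = 0"
  shows "(fst (em_step m1s m2s (\<nu>, \<omega>)) + snd (em_step m1s m2s (\<nu>, \<omega>))) /\<^sub>R 2 - c = em_drift b (a \<bullet> b) *\<^sub>R b"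
    and "(snd (em_step m1s m2s (\<nu>, \<omega>)) - fst (em_step m1s m2s (\<nu>, \<omega>))) /\<^sub>R 2 = em_contraction b (a \<bullet> b) *\<^sub>R b"
proof -
  have "(\<nu>, \<omega>) = (c + a - b, c + a + b)"
    by (simp add: a_def b_def c_def algebra_simps flip: scaleR_add_left)
  then have "em_step m1s m2s (\<nu>, \<omega>) =
    (c + (em_drift b (a \<bullet> b) - em_contraction b (a \<bullet> b)) *\<^sub>R b,
     c + (em_drift b (a \<bullet> b) + em_contraction b (a \<bullet> b)) *\<^sub>R b)"
    unfolding c_def using em_step_reparam[OF assms(4)] by simp
  then show "(fst (em_step m1s m2s (\<nu>, \<omega>)) + snd (em_step m1s m2s (\<nu>, \<omega>))) /\<^sub>R 2 - c = em_drift b (a \<bullet> b) *\<^sub>R b"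
    and "(snd (em_step m1s m2s (\<nu>, \<omega>)) - fst (em_step m1s m2s (\<nu>, \<omega>))) /\<^sub>R 2 = em_contraction b (a \<bullet> b) *\<^sub>R b"
    by (simp_all add: algebra_simps flip: scaleR_add_left)
qed

section \<open>Contraction of the half-difference\<close>

lemma integral_gauss_pdf_mult_one_minus:
  fixes s :: "'a::euclidean_space \<Rightarrow> real"
  assumes [measurable]: "s \<in> borel_measurable borel" and bound: "\<And>z. \<bar>s z\<bar> \<le> C"
  defines "p \<equiv> \<integral>z. gauss_pdf z * s z \<partial>lborel"
  shows "(\<integral>z. gauss_pdf z * (s z * (1 - s z)) \<partial>lborel) = p * (1 - p) - (\<integral>z. gauss_pdf z * (s z - p)\<^sup>2 \<partial>lborel)"
proof -
  have int_s: "integrable lborel (\<lambda>z. gauss_pdf z * s z)"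
    by (rule integrable_gauss_pdf_bounded[OF _ bound]) simp
  have "\<bar>(s z)\<^sup>2\<bar> \<le> C\<^sup>2" for z
    using power_mono[OF bound abs_ge_zero, of z 2] by simp
  then have int_s2: "integrable lborel (\<lambda>z. gauss_pdf z * (s z)\<^sup>2)"
    by (rule integrable_gauss_pdf_bounded[rotated]) simp
  define E2 where "E2 = (\<integral>z. gauss_pdf z * (s z)\<^sup>2 \<partial>lborel)"
  have "(\<integral>z. gauss_pdf z * (s z - p)\<^sup>2 \<partial>lborel)
      = (\<integral>z. (gauss_pdf z * (s z)\<^sup>2 - 2 * p * (gauss_pdf z * s z)) + p\<^sup>2 * gauss_pdf z \<partial>lborel)"
    by (simp add: power2_eq_square algebra_simps)
  also have "\<dots> = (\<integral>z. gauss_pdf z * (s z)\<^sup>2 - 2 * p * (gauss_pdf z * s z) \<partial>lborel) + p\<^sup>2"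
    using int_s int_s2 integrable_gauss_pdf
    by (subst Bochner_Integration.integral_add) (auto simp: integral_gauss_pdf)
  also have "(\<integral>z. gauss_pdf z * (s z)\<^sup>2 - 2 * p * (gauss_pdf z * s z) \<partial>lborel) = E2 - 2 * p * p"
    using int_s int_s2 by (simp add: E2_def p_def)
  finally have var: "(\<integral>z. gauss_pdf z * (s z - p)\<^sup>2 \<partial>lborel) = E2 - p\<^sup>2"
    by (simp add: power2_eq_square)
  have "(\<integral>z. gauss_pdf z * (s z * (1 - s z)) \<partial>lborel) = (\<integral>z. gauss_pdf z * s z - gauss_pdf z * (s z)\<^sup>2 \<partial>lborel)"
    by (simp add: power2_eq_square algebra_simps)
  also have "\<dots> = p - E2"
    using int_s int_s2 by (simp add: E2_def p_def)
  finally show ?thesis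
    unfolding var by (simp add: power2_eq_square algebra_simps)
qed

definition resp_var :: "'a::euclidean_space \<Rightarrow> real \<Rightarrow> real" where
  "resp_var b \<kappa> = (\<integral>z. gauss_pdf z * (resp b \<kappa> z - resp_mass b \<kappa>)\<^sup>2 \<partial>lborel)"

lemma resp_var_nonneg: "0 \<le> resp_var b \<kappa>"
  unfolding resp_var_def by (rule integral_nonneg_AE) (simp add: gauss_pdf_nonneg)

lemma em_contraction_eq: "em_contraction b \<kappa> = 1 - resp_var b \<kappa> / (resp_mass b \<kappa> * (1 - resp_mass b \<kappa>))"
proof -
  have "resp_info b \<kappa> = resp_mass b \<kappa> * (1 - resp_mass b \<kappa>) - resp_var b \<kappa>"
    unfolding resp_info_def resp_var_def resp_mass_def
    by (rule integral_gauss_pdf_mult_one_minus[where C=1])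
       (auto simp: abs_le_iff less_imp_le resp_pos resp_less_one)
  then show ?thesis
    using resp_mass_pos[of b \<kappa>] resp_mass_less_one[of b \<kappa>]
    by (simp add: em_contraction_def field_simps)
qed

lemma em_contraction_le: "em_contraction b \<kappa> \<le> 1 - 4 * resp_var b \<kappa>"
proof -
  let ?p = "resp_mass b \<kappa>"
  have "0 < ?p * (1 - ?p)" "?p * (1 - ?p) \<le> 1/4"
    using resp_mass_pos[of b \<kappa>] resp_mass_less_one[of b \<kappa>] zero_le_power2[of "?p - 1/2"]
    by (auto simp: power2_eq_square algebra_simps)
  moreover have "resp_var b \<kappa> * (?p * (1 - ?p) * 4) \<le> resp_var b \<kappa> * 1"
    using calculation resp_var_nonneg[of b \<kappa>] by (intro mult_left_mono) auto
  ultimately have "4 * resp_var b \<kappa> \<le> resp_var b \<kappa> / (?p * (1 - ?p))"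
    by (simp add: le_divide_eq algebra_simps)
  then show ?thesis
    unfolding em_contraction_eq by linarith
qed

lemma em_contraction_nonneg: "0 \<le> em_contraction b \<kappa>"
  unfolding em_contraction_def
  using resp_info_nonneg[of b \<kappa>] resp_mass_pos[of b \<kappa>] resp_mass_less_one[of b \<kappa>] by simp

lemma em_contraction_le_one: "em_contraction b \<kappa> \<le> 1"
  using em_contraction_le[of b \<kappa>] resp_var_nonneg[of b \<kappa>] by linarith

lemma abs_em_drift_le: "\<bar>em_drift b \<kappa>\<bar> \<le> em_contraction b \<kappa>"
proof -
  have "0 \<le> resp_info b \<kappa> / resp_mass b \<kappa>" "0 \<le> resp_info b \<kappa> / (1 - resp_mass b \<kappa>)"
    using resp_info_nonneg[of b \<kappa>] resp_mass_pos[of b \<kappa>] resp_mass_less_one[of b \<kappa>] by simp_all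
  then show ?thesis
    unfolding em_drift_def em_contraction_def by linarith
qed

lemma integral_gauss_pdf_ge_cball:
  fixes f :: "'a::euclidean_space \<Rightarrow> real"
  assumes int: "integrable lborel (\<lambda>z. gauss_pdf z * f z)" and nonneg: "\<And>z. 0 \<le> f z"
    and "0 \<le> \<eta>" and on_ball: "\<And>z. z \<in> cball c r \<Longrightarrow> \<eta> \<le> f z"
  shows "\<eta> * ((2 * pi) powr (- real DIM('a) / 2) * exp (- (norm c + r)\<^sup>2 / 2)) * measure lborel (cball c r)
    \<le> (\<integral>z. gauss_pdf z * f z \<partial>lborel)"
proof -
  define K where "K = (2 * pi) powr (- real DIM('a) / 2) * exp (- (norm c + r)\<^sup>2 / 2)"
  have le: "\<eta> * K * indicator (cball c r) z \<le> gauss_pdf z * f z" for z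
  proof (cases "z \<in> cball c r")
    case True
    then have "norm z \<le> norm c + r"
      using norm_triangle_sub[of z c] by (simp add: dist_norm norm_minus_commute)
    moreover have "0 \<le> norm z" by simp
    ultimately have "(norm z)\<^sup>2 \<le> (norm c + r)\<^sup>2"
      by (rule power_mono)
    then have "K \<le> gauss_pdf z"
      unfolding K_def gauss_pdf_def by (intro mult_left_mono) auto
    then have "\<eta> * K \<le> f z * gauss_pdf z"
      using on_ball[OF True] \<open>0 \<le> \<eta>\<close> by (intro mult_mono) (auto simp: K_def)
    then show ?thesis
      using True by (simp add: mult.commute)
  qed (simp add: gauss_pdf_nonneg nonneg)
  have "integrable lborel (\<lambda>z::'a. \<eta> * K * indicator (cball c r) z)"
    using emeasure_lborel_cball_finite[of c r] by (intro integrable_mult_right integrable_real_indicator) auto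
  from integral_mono[OF this int le] show ?thesis
    by (simp add: K_def)
qed

lemma resp_eq_logistic_sgn:
  assumes "b \<noteq> 0"
  shows "resp b \<kappa> z = logistic (2 * norm b * (\<kappa> / norm b - z \<bullet> sgn b))"
proof -
  have "norm b * (\<kappa> / norm b - z \<bullet> sgn b) = \<kappa> - z \<bullet> b"
    using assms by (simp add: sgn_div_norm right_diff_distrib)
  then show ?thesis
    unfolding resp_def by (metis mult.assoc right_diff_distrib)
qed

lemma abs_inner_diff_le_of_mem_cball:
  assumes "z \<in> cball (t *\<^sub>R u) r" and "norm u = 1"
  shows "\<bar>z \<bullet> u - t\<bar> \<le> r"
proof -
  have "\<bar>(z - t *\<^sub>R u) \<bullet> u\<bar> \<le> r"
    using assms Cauchy_Schwarz_ineq2[of "z - t *\<^sub>R u" u] by (simp add: dist_norm norm_minus_commute)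
  then show ?thesis
    using assms(2) by (simp add: inner_diff_left flip: power2_norm_eq_inner)
qed

text \<open>Along \<open>sgn b\<close> the weight \<open>resp b \<kappa>\<close> is a logistic ramp of slope \<open>2 norm b \<ge> 2 \<epsilon>\<close> centred at
  \<open>t = \<kappa> / norm b\<close>; a unit step beyond the centre, on the side away from \<open>p\<close>, it differs from \<open>p\<close> by at
  least \<open>logistic (2 \<epsilon>) - 1/2\<close>.\<close>
lemma resp_far_from_cball:
  fixes b :: "'a::euclidean_space"
  assumes "0 < \<epsilon>" "\<epsilon> \<le> norm b" and \<kappa>: "\<bar>\<kappa>\<bar> \<le> M * norm b"
  obtains c where "norm c \<le> M + 3/2"
    and "\<And>z. z \<in> cball c (1/2) \<Longrightarrow> logistic (2 * \<epsilon>) - 1/2 \<le> \<bar>resp b \<kappa> z - p\<bar>"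
proof -
  have "b \<noteq> 0" using assms by auto
  define t where "t = \<kappa> / norm b"
  have "\<bar>t\<bar> \<le> M"
    using \<kappa> \<open>b \<noteq> 0\<close> by (simp add: t_def abs_div divide_le_eq)
  define \<sigma> :: real where "\<sigma> = (if p \<le> 1/2 then -1 else 1)"
  show thesis
  proof
    show "norm ((t + \<sigma> * (3/2)) *\<^sub>R sgn b) \<le> M + 3/2"
      using \<open>\<bar>t\<bar> \<le> M\<close> \<open>b \<noteq> 0\<close> by (simp add: \<sigma>_def norm_sgn abs_le_iff)
  next
    fix z assume "z \<in> cball ((t + \<sigma> * (3/2)) *\<^sub>R sgn b) (1/2)"
    from abs_inner_diff_le_of_mem_cball[OF this] \<open>b \<noteq> 0\<close>
    have z: "\<bar>z \<bullet> sgn b - (t + \<sigma> * (3/2))\<bar> \<le> 1/2" by (simp add: norm_sgn)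
    have ramp: "resp b \<kappa> z = logistic (2 * norm b * (t - z \<bullet> sgn b))"
      using resp_eq_logistic_sgn[OF \<open>b \<noteq> 0\<close>] by (simp add: t_def)
    show "logistic (2 * \<epsilon>) - 1/2 \<le> \<bar>resp b \<kappa> z - p\<bar>"
    proof (cases "p \<le> 1/2")
      case True
      then have "\<sigma> = -1" by (simp add: \<sigma>_def)
      then have "1 \<le> t - z \<bullet> sgn b" using abs_le_D1[OF z] by linarith
      then have "2 * \<epsilon> \<le> 2 * norm b * (t - z \<bullet> sgn b)"
        using \<open>\<epsilon> \<le> norm b\<close> mult_left_mono[of 1 "t - z \<bullet> sgn b" "norm b"] by simp
      then have "logistic (2 * \<epsilon>) \<le> resp b \<kappa> z"
        unfolding ramp by (rule logistic_mono)
      then show ?thesis using True by linarith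
    next
      case False
      then have "\<sigma> = 1" by (simp add: \<sigma>_def)
      then have "1 \<le> z \<bullet> sgn b - t" using abs_le_D2[OF z] by linarith
      then have "2 * norm b * (t - z \<bullet> sgn b) \<le> - (2 * \<epsilon>)"
        using \<open>\<epsilon> \<le> norm b\<close> mult_left_mono[of 1 "z \<bullet> sgn b - t" "norm b"] by (simp add: algebra_simps)
      then have "resp b \<kappa> z \<le> 1 - logistic (2 * \<epsilon>)"
        unfolding ramp logistic_minus[symmetric] by (rule logistic_mono)
      then show ?thesis using False by linarith
    qed
  qed
qed

lemma resp_var_lower_bound:
  fixes b :: "'a::euclidean_space"
  assumes "0 < \<epsilon>" "\<epsilon> \<le> norm b" "\<bar>\<kappa>\<bar> \<le> M * norm b"
  shows "(logistic (2 * \<epsilon>) - 1/2)\<^sup>2 * ((2 * pi) powr (- real DIM('a) / 2) * exp (- (M + 2)\<^sup>2 / 2))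
      * (unit_ball_vol DIM('a) * (1/2) ^ DIM('a)) \<le> resp_var b \<kappa>"
proof -
  let ?\<delta> = "logistic (2 * \<epsilon>) - 1/2" and ?p = "resp_mass b \<kappa>" and ?C = "(2 * pi) powr (- real DIM('a) / 2)"
  obtain c where c: "norm c \<le> M + 3/2" and far: "\<And>z. z \<in> cball c (1/2) \<Longrightarrow> ?\<delta> \<le> \<bar>resp b \<kappa> z - ?p\<bar>"
    using resp_far_from_cball[OF assms] by blast
  have "0 \<le> ?\<delta>" using logistic_gt_half[of "2 * \<epsilon>"] \<open>0 < \<epsilon>\<close> by simp
  have "\<bar>(resp b \<kappa> z - ?p)\<^sup>2\<bar> \<le> 1" for z
    using resp_pos[of b \<kappa> z] resp_less_one[of b \<kappa> z] resp_mass_pos[of b \<kappa>] resp_mass_less_one[of b \<kappa>]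
    by (simp add: abs_square_le_1)
  then have int: "integrable lborel (\<lambda>z. gauss_pdf z * (resp b \<kappa> z - ?p)\<^sup>2)"
    by (rule integrable_gauss_pdf_bounded[rotated]) simp
  have "?\<delta>\<^sup>2 \<le> (resp b \<kappa> z - ?p)\<^sup>2" if "z \<in> cball c (1/2)" for z
    using power_mono[OF far[OF that] \<open>0 \<le> ?\<delta>\<close>, of 2] by simp
  from integral_gauss_pdf_ge_cball[where c=c and r="1/2", OF int _ _ this]
  have "?\<delta>\<^sup>2 * (?C * exp (- (norm c + 1/2)\<^sup>2 / 2)) * (unit_ball_vol DIM('a) * (1/2) ^ DIM('a)) \<le> resp_var b \<kappa>"
    by (simp add: resp_var_def content_cball)
  moreover have "exp (- (M + 2)\<^sup>2 / 2) \<le> exp (- (norm c + 1/2)\<^sup>2 / 2)"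
    using c power_mono[of "norm c + 1/2" "M + 2" 2] by simp
  then have "?\<delta>\<^sup>2 * (?C * exp (- (M + 2)\<^sup>2 / 2)) * (unit_ball_vol DIM('a) * (1/2) ^ DIM('a))
      \<le> ?\<delta>\<^sup>2 * (?C * exp (- (norm c + 1/2)\<^sup>2 / 2)) * (unit_ball_vol DIM('a) * (1/2) ^ DIM('a))"
    by (intro mult_right_mono mult_left_mono) auto
  ultimately show ?thesis
    by linarith
qed

lemma em_contraction_uniform:
  assumes "0 < \<epsilon>"
  obtains \<delta> where "0 < \<delta>"
    and "\<And>b :: 'a::euclidean_space. \<And>\<kappa>. \<epsilon> \<le> norm b \<Longrightarrow> \<bar>\<kappa>\<bar> \<le> M * norm b \<Longrightarrow> em_contraction b \<kappa> \<le> 1 - \<delta>"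
proof
  let ?r = "(logistic (2 * \<epsilon>) - 1/2)\<^sup>2 * ((2 * pi) powr (- real DIM('a) / 2) * exp (- (M + 2)\<^sup>2 / 2))
      * (unit_ball_vol DIM('a) * (1/2) ^ DIM('a))"
  show "0 < 4 * ?r"
    using logistic_gt_half[of "2 * \<epsilon>"] \<open>0 < \<epsilon>\<close> by simp
  show "em_contraction b \<kappa> \<le> 1 - 4 * ?r" if "\<epsilon> \<le> norm b" "\<bar>\<kappa>\<bar> \<le> M * norm b" for b :: 'a and \<kappa>
    using em_contraction_le[of b \<kappa>] resp_var_lower_bound[OF \<open>0 < \<epsilon>\<close> that] by linarith
qed

section \<open>Convergence\<close>

lemma LIMSEQ_zero_of_uniform_contraction:
  fixes b :: "nat \<Rightarrow> 'a::real_normed_vector" and \<rho> :: "nat \<Rightarrow> real"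
  assumes step: "\<And>t. b (Suc t) = \<rho> t *\<^sub>R b t"
    and \<rho>_nonneg: "\<And>t. 0 \<le> \<rho> t" and \<rho>_le_1: "\<And>t. \<rho> t \<le> 1"
    and uniform: "\<And>\<epsilon>. 0 < \<epsilon> \<Longrightarrow> \<exists>\<delta>>0. \<forall>t. \<epsilon> \<le> norm (b t) \<longrightarrow> \<rho> t \<le> 1 - \<delta>"
  shows "b \<longlonglongrightarrow> 0"
proof -
  have norm_step: "norm (b (Suc t)) = \<rho> t * norm (b t)" for t
    using step \<rho>_nonneg by simp
  have "decseq (\<lambda>t. norm (b t))"
    by (rule decseq_SucI) (simp add: norm_step \<rho>_le_1 \<rho>_nonneg mult_left_le_one_le)
  then obtain L where lim: "(\<lambda>t. norm (b t)) \<longlonglongrightarrow> L" and L_le: "\<And>t. L \<le> norm (b t)"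
    using decseq_convergent[of _ 0] by (metis norm_ge_zero)
  have "L \<le> 0"
  proof (rule ccontr)
    assume "\<not> L \<le> 0"
    then obtain \<delta> where "0 < \<delta>" and contr: "\<And>t. \<rho> t \<le> 1 - \<delta>"
      using uniform[of L] L_le by force
    have "norm (b (Suc t)) \<le> (1 - \<delta>) * norm (b t)" for t
      unfolding norm_step by (rule mult_right_mono[OF contr norm_ge_zero])
    moreover have "(\<lambda>t. norm (b (Suc t))) \<longlonglongrightarrow> L"
      using lim by (rule LIMSEQ_Suc)
    ultimately have "L \<le> (1 - \<delta>) * L"
      using LIMSEQ_le[OF _ tendsto_mult_left[OF lim]] by blast
    then show False using \<open>0 < \<delta>\<close> \<open>\<not> L \<le> 0\<close> by (simp add: algebra_simps mult_le_0_iff)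
  qed
  moreover have "0 \<le> L"
    using lim by (rule LIMSEQ_le_const) simp
  ultimately have "(\<lambda>t. norm (b t)) \<longlonglongrightarrow> 0"
    using lim by simp
  then show ?thesis by (simp add: tendsto_norm_zero_iff)
qed

lemma em_reparam_tendsto_zero:
  fixes a b :: "nat \<Rightarrow> 'a::euclidean_space"
  assumes a_step: "\<And>t. a (Suc t) = em_drift (b t) (a t \<bullet> b t) *\<^sub>R b t"
    and b_step: "\<And>t. b (Suc t) = em_contraction (b t) (a t \<bullet> b t) *\<^sub>R b t"
  shows "a \<longlonglongrightarrow> 0" and "b \<longlonglongrightarrow> 0"
proof -
  define \<rho> where "\<rho> t = em_contraction (b t) (a t \<bullet> b t)" for t
  have b_le: "norm (b (Suc t)) \<le> norm (b t)" for t
    unfolding b_step norm_scaleR abs_of_nonneg[OF em_contraction_nonneg]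
    by (rule mult_left_le_one_le) (simp_all add: em_contraction_nonneg em_contraction_le_one)
  have a_le: "norm (a (Suc t)) \<le> norm (b (Suc t))" for t
    unfolding a_step b_step norm_scaleR abs_of_nonneg[OF em_contraction_nonneg]
    by (rule mult_right_mono[OF abs_em_drift_le norm_ge_zero])
  define M where "M = norm (a 0) + norm (b 0)"
  have b_le_0: "norm (b t) \<le> norm (b 0)" for t
    by (induction t) (use b_le order_trans in blast)+
  have "norm (a t) \<le> M" for t
  proof (cases t)
    case (Suc s)
    then show ?thesis
      using a_le[of s] b_le_0[of t] norm_ge_zero[of "a 0"] unfolding M_def Suc by linarith
  qed (simp add: M_def)
  then have \<kappa>_bound: "\<bar>a t \<bullet> b t\<bar> \<le> M * norm (b t)" for t
    using Cauchy_Schwarz_ineq2[of "a t" "b t"] by (meson mult_right_mono norm_ge_zero order_trans)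
  show "b \<longlonglongrightarrow> 0"
  proof (rule LIMSEQ_zero_of_uniform_contraction[where \<rho>=\<rho>])
    show "b (Suc t) = \<rho> t *\<^sub>R b t" "0 \<le> \<rho> t" "\<rho> t \<le> 1" for t
      by (simp_all add: \<rho>_def b_step em_contraction_nonneg em_contraction_le_one)
  next
    fix \<epsilon> :: real assume "0 < \<epsilon>"
    then obtain \<delta> where "0 < \<delta>" and "\<And>b :: 'a. \<And>\<kappa>. \<epsilon> \<le> norm b \<Longrightarrow> \<bar>\<kappa>\<bar> \<le> M * norm b \<Longrightarrow> em_contraction b \<kappa> \<le> 1 - \<delta>"
      using em_contraction_uniform[OF \<open>0 < \<epsilon>\<close>, of M] by blast
    then show "\<exists>\<delta>>0. \<forall>t. \<epsilon> \<le> norm (b t) \<longrightarrow> \<rho> t \<le> 1 - \<delta>"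
      using \<kappa>_bound unfolding \<rho>_def by blast
  qed
  then have "(\<lambda>t. norm (b (Suc t))) \<longlonglongrightarrow> 0"
    by (simp add: LIMSEQ_Suc tendsto_norm_zero)
  then have "(\<lambda>t. a (Suc t)) \<longlonglongrightarrow> 0"
    by (rule Lim_null_comparison[OF always_eventually[OF allI[OF a_le]]])
  then show "a \<longlonglongrightarrow> 0"
    by (rule LIMSEQ_imp_Suc)
qed

theorem theorem5:
  fixes m1s m2s m10 m20 :: "'a::euclidean_space"
  defines "a \<equiv> (\<lambda>t. (fst (em_iter m1s m2s m10 m20 t) + snd (em_iter m1s m2s m10 m20 t)) /\<^sub>R 2
                     - (m1s + m2s) /\<^sub>R 2)"
      and "b \<equiv> (\<lambda>t. (snd (em_iter m1s m2s m10 m20 t) - fst (em_iter m1s m2s m10 m20 t)) /\<^sub>R 2)"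
      and "\<theta> \<equiv> (m2s - m1s) /\<^sub>R 2"
  assumes "inner (b 0) \<theta> = 0"
  shows "((\<lambda>t. (a t, b t)) \<longlongrightarrow> (0, 0)) sequentially"
proof -
  have step: "a (Suc t) = em_drift (b t) (a t \<bullet> b t) *\<^sub>R b t"
    "b (Suc t) = em_contraction (b t) (a t \<bullet> b t) *\<^sub>R b t" if "b t \<bullet> (m2s - m1s) = 0" for t
  proof -
    obtain \<nu> \<omega> where it: "em_iter m1s m2s m10 m20 t = (\<nu>, \<omega>)" by fastforce
    then have it_Suc: "em_iter m1s m2s m10 m20 (Suc t) = em_step m1s m2s (\<nu>, \<omega>)"
      by (simp add: em_iter_def)
    show "a (Suc t) = em_drift (b t) (a t \<bullet> b t) *\<^sub>R b t" "b (Suc t) = em_contraction (b t) (a t \<bullet> b t) *\<^sub>R b t"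
      using that unfolding a_def b_def it it_Suc fst_conv snd_conv by (rule em_step_reparam_pair)+
  qed
  have orth: "b t \<bullet> (m2s - m1s) = 0" for t
  proof (induction t)
    case 0
    then show ?case using assms(4) by (simp add: \<theta>_def)
  next
    case (Suc t)
    then show ?case using step(2)[OF Suc] by simp
  qed
  show ?thesis
    using em_reparam_tendsto_zero[where a=a and b=b, OF step[OF orth]] by (rule tendsto_Pair)
qed

end
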